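(* Let $D_1,\dots,D_n\in\mathbb{R}^{d\times m}$ be datum shapes with $\tilde{D}_i=\begin{bmatrix}D_i\\ \mathbf{1}^{\top}\end{bmatrix}$ such that each $\tilde{D}_i\tilde{D}_i^{\top}$ is invertible, and let $\mathcal{Q}_{I}=\sum_{i=1}^n\tilde{D}_i^{\top}(\tilde{D}_i\tilde{D}_i^{\top})^{-1}\tilde{D}_i$. Fix a diagonal matrix $\Lambda\in\mathbb{R}^{d\times d}$ and consider problem (I): $$\min_{\tilde{A}_1,\dots,\tilde{A}_n\in\mathbb{R}^{d\times(d+1)},\,S\in\mathbb{R}^{d\times m}}\ \sum_{i=1}^n\|\tilde{A}_i\tilde{D}_i-S\|_F^2\quad\text{s.t.}\quad SS^{\top}=\Lambda,\ S\mathbf{1}=0.$$ If each $D_i$ is replaced by $D_i'=R_iD_i+t_i\mathbf{1}^{\top}$ for arbitrary (possibly distinct) rotations $R_i\in\mathbb{R}^{d\times d}$ and translations $t_i\in\mathbb{R}^d$, then the matrix $\mathcal{Q}_I$ is unchanged, and so is the optimal reference shape $S$ of problem (I) (the set of $S$-components of optimal solutions is the same for the original and the transformed datum shapes).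
   Context: $\mathbf{1}\in\mathbb{R}^m$ denotes the all-ones vector and $\|\cdot\|_F$ the Frobenius norm. *)

theory Defs
  imports "HOL-Analysis.Analysis"
begin

text \<open>Matrices in R^{d x m} are \<open>real^'m^'d\<close>. The augmented index set of size d+1 is
  \<open>'d option\<close>, where \<open>None\<close> is the extra (last) row of ones.\<close>

definition ones :: "real^'m" where
  "ones = (\<chi> j. 1)"

definition aug :: "real^'m^'d \<Rightarrow> real^'m^('d option)" where
  "aug D = (\<chi> k j. case k of None \<Rightarrow> 1 | Some r \<Rightarrow> D $ r $ j)"

definition frob_norm :: "real^'c^'r \<Rightarrow> real" where
  "frob_norm A = sqrt (\<Sum>i\<in>UNIV. \<Sum>j\<in>UNIV. (A $ i $ j)^2)"

definition diagonal_matrix :: "real^'d^'d \<Rightarrow> bool" where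
  "diagonal_matrix L \<longleftrightarrow> (\<forall>i j. i \<noteq> j \<longrightarrow> L $ i $ j = 0)"

definition QI :: "nat \<Rightarrow> (nat \<Rightarrow> real^'m^'d) \<Rightarrow> real^'m^'m" where
  "QI n D = (\<Sum>i<n. transpose (aug (D i)) **
                    matrix_inv (aug (D i) ** transpose (aug (D i))) ** aug (D i))"

definition objI :: "nat \<Rightarrow> (nat \<Rightarrow> real^'m^'d) \<Rightarrow> (nat \<Rightarrow> real^('d option)^'d) \<Rightarrow> real^'m^'d \<Rightarrow> real" where
  "objI n D A S = (\<Sum>i<n. (frob_norm (A i ** aug (D i) - S))^2)"

definition feasibleI :: "real^'d^'d \<Rightarrow> real^'m^'d \<Rightarrow> bool" where
  "feasibleI L S \<longleftrightarrow> S ** transpose S = L \<and> S *v ones = 0"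

definition optimalI :: "nat \<Rightarrow> (nat \<Rightarrow> real^'m^'d) \<Rightarrow> real^'d^'d
      \<Rightarrow> (nat \<Rightarrow> real^('d option)^'d) \<Rightarrow> real^'m^'d \<Rightarrow> bool" where
  "optimalI n D L A S \<longleftrightarrow> feasibleI L S \<and>
     (\<forall>A' S'. feasibleI L S' \<longrightarrow> objI n D A S \<le> objI n D A' S')"

definition optimal_refs :: "nat \<Rightarrow> (nat \<Rightarrow> real^'m^'d) \<Rightarrow> real^'d^'d \<Rightarrow> (real^'m^'d) set" where
  "optimal_refs n D L = {S. \<exists>A. optimalI n D L A S}"

end

theory Submission
  imports Defs
begin

text \<open>Both \<open>Q\<^sub>I\<close> and problem (I) see a datum shape \<open>D\<^sub>i\<close> only through its augmentation, and
  a rigid motion acts on the augmentation as left multiplication by the invertible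
  homogeneous-coordinates matrix \<open>[[R\<^sub>i, t\<^sub>i], [0, 1]]\<close>.  The row-space projector
  \<open>X\<^sup>T (X X\<^sup>T)\<^sup>-\<^sup>1 X\<close> is unchanged when \<open>X\<close> is multiplied on the left by an invertible matrix,
  which gives invariance of \<open>Q\<^sub>I\<close>; and in problem (I) the substitution \<open>A\<^sub>i \<mapsto> A\<^sub>i T\<^sub>i\<close> is a
  bijection of the unconstrained affine variables that preserves the objective, so the
  optimal reference shapes coincide.  Neither argument uses that \<open>\<Lambda>\<close> is diagonal.\<close>

lemma matrix_inv_right:
  assumes "invertible A"
  shows "A ** matrix_inv A = mat 1"
  using someI_ex[OF assms[unfolded invertible_def]] by (simp add: matrix_inv_def)

lemma matrix_inv_left:
  assumes "invertible A"
  shows "matrix_inv A ** A = mat 1"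
  using someI_ex[OF assms[unfolded invertible_def]] by (simp add: matrix_inv_def)

lemma matrix_inv_unique:
  fixes A :: "'a::semiring_1^'n^'m"
  assumes "A ** B = mat 1" "B ** A = mat 1"
  shows "matrix_inv A = B"
proof -
  have "invertible A"
    using assms by (auto simp: invertible_def)
  have "matrix_inv A = (B ** A) ** matrix_inv A"
    by (simp add: assms)
  also have "\<dots> = B"
    by (simp add: matrix_mul_assoc[symmetric] matrix_inv_right[OF \<open>invertible A\<close>])
  finally show ?thesis .
qed

lemma matrix_inv_mult:
  fixes A :: "'a::semiring_1^'n^'m" and B :: "'a^'k^'n"
  assumes "invertible A" "invertible B"
  shows "matrix_inv (A ** B) = matrix_inv B ** matrix_inv A"
proof (rule matrix_inv_unique)
  show "A ** B ** (matrix_inv B ** matrix_inv A) = mat 1"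
    by (simp add: matrix_mul_assoc matrix_inv_right assms)
      (simp add: matrix_mul_assoc[symmetric] matrix_inv_right assms)
  show "matrix_inv B ** matrix_inv A ** (A ** B) = mat 1"
    by (simp add: matrix_mul_assoc matrix_inv_left assms)
      (simp add: matrix_mul_assoc[symmetric] matrix_inv_left assms)
qed

lemma invertible_transpose:
  fixes A :: "'a::comm_semiring_1^'n^'m"
  assumes "invertible A"
  shows "invertible (transpose A)"
  using assms unfolding invertible_def by (metis matrix_transpose_mul transpose_mat)

lemma matrix_inv_transpose:
  fixes A :: "'a::comm_semiring_1^'n^'m"
  assumes "invertible A"
  shows "matrix_inv (transpose A) = transpose (matrix_inv A)"
  by (rule matrix_inv_unique)
    (simp_all add: matrix_transpose_mul[symmetric] matrix_inv_left matrix_inv_right assms)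

definition row_space_projector :: "'a::semiring_1^'m^'k \<Rightarrow> 'a^'m^'m" where
  "row_space_projector X = transpose X ** matrix_inv (X ** transpose X) ** X"

lemma row_space_projector_left_mult:
  fixes T :: "'a::comm_semiring_1^'k^'k" and X :: "'a^'m^'k"
  assumes T: "invertible T" and X: "invertible (X ** transpose X)"
  shows "row_space_projector (T ** X) = row_space_projector X"
proof -
  have inv_TX: "matrix_inv ((T ** X) ** transpose (T ** X))
      = transpose (matrix_inv T) ** matrix_inv (X ** transpose X) ** matrix_inv T"
  proof -
    have "matrix_inv ((T ** X) ** transpose (T ** X))
        = matrix_inv ((T ** (X ** transpose X)) ** transpose T)"
      by (simp add: matrix_transpose_mul matrix_mul_assoc)
    also have "\<dots> = matrix_inv (transpose T) ** (matrix_inv (X ** transpose X) ** matrix_inv T)"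
      by (simp add: matrix_inv_mult invertible_mult invertible_transpose T X)
    finally show ?thesis
      by (simp add: matrix_inv_transpose matrix_mul_assoc T)
  qed
  have "transpose T ** transpose (matrix_inv T) = mat 1"
    by (metis matrix_transpose_mul matrix_inv_left T transpose_mat)
  have "row_space_projector (T ** X)
      = transpose X ** (transpose T ** transpose (matrix_inv T)) ** matrix_inv (X ** transpose X)
          ** (matrix_inv T ** T) ** X"
    unfolding row_space_projector_def inv_TX by (simp add: matrix_transpose_mul matrix_mul_assoc)
  also have "\<dots> = row_space_projector X"
    by (simp add: row_space_projector_def matrix_inv_left T
        \<open>transpose T ** transpose (matrix_inv T) = mat 1\<close>)
  finally show ?thesis .
qed

lemma sum_UNIV_option:
  fixes f :: "'a::finite option \<Rightarrow> 'b::comm_monoid_add"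
  shows "(\<Sum>x\<in>UNIV. f x) = f None + (\<Sum>r\<in>UNIV. f (Some r))"
  by (simp add: UNIV_option_conv sum.reindex)

definition affine_matrix :: "'a::semiring_1^'n^'n \<Rightarrow> 'a^'n \<Rightarrow> 'a^('n option)^('n option)" where
  "affine_matrix A a = (\<chi> k l. case k of
      None \<Rightarrow> (case l of None \<Rightarrow> 1 | Some _ \<Rightarrow> 0)
    | Some r \<Rightarrow> (case l of None \<Rightarrow> a $ r | Some c \<Rightarrow> A $ r $ c))"

lemma affine_matrix_mult:
  "affine_matrix A a ** affine_matrix B b = affine_matrix (A ** B) (A *v b + a)"
  unfolding vec_eq_iff
  by (auto split: option.split
      simp: affine_matrix_def matrix_matrix_mult_def matrix_vector_mult_def sum_UNIV_option
        add.commute)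

lemma affine_matrix_id: "affine_matrix (mat 1) 0 = mat 1"
  unfolding vec_eq_iff by (auto split: option.split simp: affine_matrix_def mat_def)

lemma invertible_affine_matrix:
  fixes A :: "'a::field^'n^'n"
  assumes "invertible A"
  shows "invertible (affine_matrix A a)"
proof -
  have "A *v (matrix_inv A *v - a) + a = 0"
    by (simp add: matrix_vector_mul_assoc matrix_inv_right assms)
  then have "affine_matrix A a ** affine_matrix (matrix_inv A) (matrix_inv A *v - a) = mat 1"
    by (simp add: affine_matrix_mult matrix_inv_right assms affine_matrix_id)
  then show ?thesis
    using invertible_right_inverse by blast
qed

lemma aug_rigid_motion:
  "aug (R ** D + (\<chi> r j. t $ r * ones $ j)) = affine_matrix R t ** aug D"
  unfolding vec_eq_iff
  by (auto split: option.split
      simp: affine_matrix_def aug_def ones_def matrix_matrix_mult_def sum_UNIV_option)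

lemma QI_eq_if_aug_left_mult:
  fixes D D' :: "nat \<Rightarrow> real^'m^'d"
  assumes "\<forall>i<n. invertible (aug (D i) ** transpose (aug (D i)))"
    and "\<forall>i<n. invertible (T i)"
    and "\<forall>i<n. aug (D' i) = T i ** aug (D i)"
  shows "QI n D' = QI n D"
  unfolding QI_def row_space_projector_def[symmetric]
proof (rule sum.cong)
  fix i assume "i \<in> {..<n}"
  then show "row_space_projector (aug (D' i)) = row_space_projector (aug (D i))"
    using assms by (simp add: row_space_projector_left_mult)
qed simp

lemma objI_aug_left_mult:
  assumes "\<forall>i<n. aug (D' i) = T i ** aug (D i)"
  shows "objI n D' A S = objI n D (\<lambda>i. A i ** T i) S"
  using assms unfolding objI_def by (intro sum.cong) (simp_all add: matrix_mul_assoc)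

lemma optimal_refs_mono_if_objI_transfer:
  fixes D D' :: "nat \<Rightarrow> real^'m^'d"
  assumes "\<And>A S. objI n D' A S = objI n D (f A) S"
    and "\<And>A S. objI n D A S = objI n D' (g A) S"
  shows "optimal_refs n D' L \<subseteq> optimal_refs n D L"
proof
  fix S assume "S \<in> optimal_refs n D' L"
  then obtain A where A: "optimalI n D' L A S"
    by (auto simp: optimal_refs_def)
  have "optimalI n D L (f A) S"
    unfolding optimalI_def
  proof (intro conjI allI impI)
    show "feasibleI L S"
      using A by (simp add: optimalI_def)
    fix A' and S' :: "real^'m^'d" assume "feasibleI L S'"
    then have "objI n D' A S \<le> objI n D' (g A') S'"
      using A by (simp add: optimalI_def)
    then show "objI n D (f A) S \<le> objI n D A' S'"
      using assms(1)[of A S] assms(2)[of A' S'] by linarith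
  qed
  then show "S \<in> optimal_refs n D L"
    by (auto simp: optimal_refs_def)
qed

lemma optimal_refs_eq_if_aug_left_mult:
  assumes "\<forall>i<n. invertible (T i)"
    and "\<forall>i<n. aug (D' i) = T i ** aug (D i)"
  shows "optimal_refs n D' L = optimal_refs n D L"
proof -
  have "\<forall>i<n. aug (D i) = matrix_inv (T i) ** aug (D' i)"
    using assms by (auto simp: matrix_mul_assoc matrix_inv_left)
  note transfer = objI_aug_left_mult[OF assms(2)] objI_aug_left_mult[OF this]
  show ?thesis
    using optimal_refs_mono_if_objI_transfer[OF transfer]
      optimal_refs_mono_if_objI_transfer[OF transfer(2,1)] by blast
qed

theorem proposition2:
  fixes n :: nat
    and D :: "nat \<Rightarrow> real^'m^'d"
    and L :: "real^'d^'d"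
    and R :: "nat \<Rightarrow> real^'d^'d"
    and t :: "nat \<Rightarrow> real^'d"
  assumes inv: "\<forall>i<n. invertible (aug (D i) ** transpose (aug (D i)))"
    and diag: "diagonal_matrix L"
    and rot: "\<forall>i<n. rotation_matrix (R i)"
  defines "D' \<equiv> (\<lambda>i. R i ** D i + (\<chi> r j. t i $ r * ones $ j))"
  shows "QI n D' = QI n D \<and> optimal_refs n D' L = optimal_refs n D L"
proof -
  define T where "T i = affine_matrix (R i) (t i)" for i
  have "\<forall>i<n. invertible (T i)"
  proof (intro allI impI)
    fix i assume "i < n"
    then have "invertible (R i)"
      using rot by (auto simp: rotation_matrix_def orthogonal_matrix_def invertible_def)
    then show "invertible (T i)"
      by (simp add: T_def invertible_affine_matrix)
  qed
  moreover have "\<forall>i<n. aug (D' i) = T i ** aug (D i)"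
    by (simp add: D'_def T_def aug_rigid_motion)
  ultimately show ?thesis
    using QI_eq_if_aug_left_mult[OF inv] optimal_refs_eq_if_aug_left_mult by simp
qed

end
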